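(* Let $\Omega\subset\mathbb H^n$ be an open, horizontally bounded and (Euclidean) convex set. If $u:\overline\Omega\to\mathbb R$ is an $H$-convex function with $u=0$ on $\partial\Omega$, and $B_H(\xi_0,3R)\subset\Omega$ for some $\xi_0\in\Omega$ and $R>0$, then $$\frac1{31}\,u(\xi)\ge u(\zeta)\ge 31\,u(\xi)\qquad\forall\xi,\zeta\in B_H(\xi_0,R).$$
   Context: $\mathbb H^n=\mathbb C^n\times\mathbb R\cong\mathbb R^{2n+1}$ with real coordinates $(x,y,t)$, $z=x+iy$, group law $(z,t)\circ(z',t')=(z+z',t+t'+2\,\mathrm{Im}\langle z,z'\rangle)$, $\langle z,z'\rangle=\sum_j z_j\overline{z'_j}$. Dilations $\delta_\lambda(z,t)=(\lambda z,\lambda^2t)$. Horizontal plane at $\xi_0=(x_0,y_0,t_0)$: $H_{\xi_0}=\{(x,y,t):t=t_0+2(x\cdot y_0-x_0\cdot y)\}$. Gauge $N(z,t)=(|z|^4+t^2)^{1/4}$, $d_H(\xi,\zeta)=N(\zeta^{-1}\circ\xi)$, $B_H(\xi,r)=\{\zeta:d_H(\zeta,\xi)<r\}$, $\mathrm{diam}_H$ the $d_H$-diameter; $\Omega$ is horizontally bounded if $\sup\{\mathrm{diam}_H(\Omega\cap H_\xi):\xi\in\Omega\}<\infty$. A function $u$ on an $H$-convex set $\tilde\Omega$ is $H$-convex if $u(\xi_1\circ\delta_\lambda(\xi_1^{-1}\circ\xi_2))\le(1-\lambda)u(\xi_1)+\lambda u(\xi_2)$ for all $\xi_1,\xi_2\in\tilde\Omega$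 with $\xi_1\in H_{\xi_2}$, $\lambda\in[0,1]$. *)

theory Defs
  imports "HOL-Analysis.Analysis"
begin

text \<open>Points of the Heisenberg group H^n = C^n x R, written in real coordinates (x, y, t)
  with z = x + i y; the dimension n is CARD('n).\<close>

type_synonym 'n heis = "(real^'n) \<times> (real^'n) \<times> real"

text \<open>Group law (z,t)o(z',t') = (z+z', t+t'+2 Im<z,z'>), Im<z,z'> = y.x' - x.y'.\<close>
definition hmult :: "'n::finite heis \<Rightarrow> 'n heis \<Rightarrow> 'n heis" (infixl "\<circ>\<^sub>H" 70) where
  "hmult p q = (case p of (x, y, t) \<Rightarrow> case q of (x', y', t') \<Rightarrow>
     (x + x', y + y', t + t' + 2 * (y \<bullet> x' - x \<bullet> y')))"

definition hinv :: "'n::finite heis \<Rightarrow> 'n heis" where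
  "hinv p = (case p of (x, y, t) \<Rightarrow> (-x, -y, -t))"

definition hdil :: "real \<Rightarrow> 'n::finite heis \<Rightarrow> 'n heis" where
  "hdil l p = (case p of (x, y, t) \<Rightarrow> (l *\<^sub>R x, l *\<^sub>R y, l^2 * t))"

definition hplane :: "'n::finite heis \<Rightarrow> 'n heis set" where
  "hplane p0 = (case p0 of (x0, y0, t0) \<Rightarrow>
     {(x, y, t). t = t0 + 2 * (x \<bullet> y0 - x0 \<bullet> y)})"

definition gauge :: "'n::finite heis \<Rightarrow> real" where
  "gauge p = (case p of (x, y, t) \<Rightarrow>
     root 4 ((norm x ^ 2 + norm y ^ 2) ^ 2 + t ^ 2))"

definition dH :: "'n::finite heis \<Rightarrow> 'n heis \<Rightarrow> real" where
  "dH p q = gauge (hmult (hinv q) p)"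

definition ballH :: "'n::finite heis \<Rightarrow> real \<Rightarrow> 'n heis set" where
  "ballH p r = {q. dH q p < r}"

definition horizontally_bounded :: "'n::finite heis set \<Rightarrow> bool" where
  "horizontally_bounded S \<longleftrightarrow>
     (\<exists>C. \<forall>p\<in>S. \<forall>a\<in>S \<inter> hplane p. \<forall>b\<in>S \<inter> hplane p. dH a b \<le> C)"

definition H_convex_on :: "'n::finite heis set \<Rightarrow> ('n heis \<Rightarrow> real) \<Rightarrow> bool" where
  "H_convex_on S u \<longleftrightarrow>
     (\<forall>p1\<in>S. \<forall>p2\<in>S. \<forall>l::real. p1 \<in> hplane p2 \<and> 0 \<le> l \<and> l \<le> 1 \<longrightarrow>
        u (hmult p1 (hdil l (hmult (hinv p1) p2))) \<le> (1 - l) * u p1 + l * u p2)"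

end

theory Submission
  imports Defs
begin

text \<open>Restricted to a horizontal line, an H-convex function is an ordinary convex function
  of the line parameter. Horizontal boundedness forces every horizontal line through a point
  of \<Omega> to leave \<Omega>, where u vanishes; hence u \<le> 0, and if a horizontal step from p to q
  can be continued inside \<Omega> for \<rho> times its length beyond q, then
  u q \<le> \<rho> / (1 + \<rho>) * u p. Any two points of B(\<xi>0, R) are joined by five such steps
  staying in B(\<xi>0, 3R): move horizontally to the vertical axis through \<xi>0, change height by
  a horizontal triangle, and move out again. This gives u \<zeta> \<le> 3/5 * (1/2)^4 * u \<xi> = 3/80 * u \<xi>,
  and since 1/31 < 3/80 and u \<le> 0 both inequalities follow.\<close>

lemma hmult_eq [simp]: "(x, y, t) \<circ>\<^sub>H (x', y', t') = (x + x', y + y', t + t' + 2 * (y \<bullet> x' - x \<bullet> y'))"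
  by (simp add: hmult_def)

lemma hinv_eq [simp]: "hinv (x, y, t) = (-x, -y, -t)"
  by (simp add: hinv_def)

lemma hdil_eq [simp]: "hdil l (x, y, t) = (l *\<^sub>R x, l *\<^sub>R y, l^2 * t)"
  by (simp add: hdil_def)

lemma gauge_eq: "gauge (x, y, t) = root 4 ((norm x ^ 2 + norm y ^ 2) ^ 2 + t ^ 2)"
  by (simp add: gauge_def)

lemma hplane_iff [simp]: "(x, y, t) \<in> hplane (x0, y0, t0) \<longleftrightarrow> t = t0 + 2 * (x \<bullet> y0 - x0 \<bullet> y)"
  by (simp add: hplane_def)

lemma hmult_assoc: "(p \<circ>\<^sub>H q) \<circ>\<^sub>H r = p \<circ>\<^sub>H (q \<circ>\<^sub>H r)"
  by (cases p; cases q; cases r) (simp add: inner_add_left inner_add_right algebra_simps)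

lemma hmult_hinv_right: "p \<circ>\<^sub>H (hinv p \<circ>\<^sub>H q) = q"
  by (cases p; cases q) (simp add: inner_add_right algebra_simps inner_commute)

lemma hmult_hinv_left: "hinv p \<circ>\<^sub>H (p \<circ>\<^sub>H q) = q"
  by (cases p; cases q) (simp add: inner_add_right algebra_simps inner_commute)

lemma hmult_zero_right [simp]: "p \<circ>\<^sub>H (0, 0, 0) = p"
  by (cases p) simp

definition hline :: "'n::finite heis \<Rightarrow> real^'n \<Rightarrow> real^'n \<Rightarrow> real \<Rightarrow> 'n heis" where
  "hline p a b s = p \<circ>\<^sub>H (s *\<^sub>R a, s *\<^sub>R b, 0)"

lemma hline_eq: "hline (x, y, t) a b s = (x + s *\<^sub>R a, y + s *\<^sub>R b, t + 2 * s * (y \<bullet> a - x \<bullet> b))"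
  by (simp add: hline_def algebra_simps)

lemma hline_0 [simp]: "hline p a b 0 = p"
  by (simp add: hline_def)

lemma hline_1: "hline p a b 1 = p \<circ>\<^sub>H (a, b, 0)"
  by (simp add: hline_def)

lemma hline_hline: "hline (hline p a b \<alpha>) a b \<beta> = hline p a b (\<alpha> + \<beta>)"
  by (cases p) (simp add: hline_eq algebra_simps inner_commute)

lemma hline_in_hplane: "hline p a b \<alpha> \<in> hplane (hline p a b \<beta>)"
  by (cases p) (simp add: hline_eq inner_add_left inner_add_right algebra_simps inner_commute)

lemma continuous_on_hline: "continuous_on S (hline p a b)"
  by (cases p) (simp add: hline_eq continuous_intros)

lemma hinv_hmult_hline: "hinv p \<circ>\<^sub>H hline p a b s = (s *\<^sub>R a, s *\<^sub>R b, 0)"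
  by (simp add: hline_def hmult_hinv_left)

lemma dH_hline: "dH (hline p a b s) p = \<bar>s\<bar> * sqrt (norm a ^ 2 + norm b ^ 2)"
proof -
  have "sqrt (norm a ^ 2 + norm b ^ 2) ^ 4 = (norm a ^ 2 + norm b ^ 2) ^ 2"
    using power_mult[of "sqrt (norm a ^ 2 + norm b ^ 2)" 2 2] by simp
  then have "(\<bar>s\<bar> * sqrt (norm a ^ 2 + norm b ^ 2)) ^ 4 = (s^2 * (norm a ^ 2 + norm b ^ 2)) ^ 2"
    by (simp add: power_mult_distrib flip: power_mult)
  then have "dH (hline p a b s) p = root 4 ((\<bar>s\<bar> * sqrt (norm a ^ 2 + norm b ^ 2)) ^ 4)"
    by (simp add: dH_def hinv_hmult_hline gauge_eq power_mult_distrib distrib_left)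
  also have "\<dots> = \<bar>s\<bar> * sqrt (norm a ^ 2 + norm b ^ 2)"
    by (simp add: real_root_power_cancel)
  finally show ?thesis .
qed

lemma H_convex_on_hline:
  assumes "H_convex_on S u" and "hline p a b \<alpha> \<in> S" and "hline p a b \<beta> \<in> S"
    and "0 \<le> l" and "l \<le> 1"
  shows "u (hline p a b ((1 - l) * \<alpha> + l * \<beta>))
           \<le> (1 - l) * u (hline p a b \<alpha>) + l * u (hline p a b \<beta>)"
proof -
  let ?q = "hline p a b \<alpha>"
  have "hinv ?q \<circ>\<^sub>H hline p a b \<beta> = ((\<beta> - \<alpha>) *\<^sub>R a, (\<beta> - \<alpha>) *\<^sub>R b, 0)"
    using hinv_hmult_hline[of ?q a b "\<beta> - \<alpha>"] by (simp add: hline_hline)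
  then have "?q \<circ>\<^sub>H hdil l (hinv ?q \<circ>\<^sub>H hline p a b \<beta>) = hline p a b ((1 - l) * \<alpha> + l * \<beta>)"
    using hline_hline[of p a b \<alpha> "l * (\<beta> - \<alpha>)"]
    by (simp add: hline_def[of ?q] algebra_simps)
  with assms hline_in_hplane show ?thesis
    unfolding H_convex_on_def by metis
qed

lemma hline_meets_frontier:
  fixes \<Omega> :: "'n::finite heis set"
  assumes "open \<Omega>" and "horizontally_bounded \<Omega>" and "(a, b) \<noteq> (0, 0)" and "\<rho> \<ge> 0"
    and inside: "\<forall>s\<in>{0..\<rho>}. hline p a b s \<in> \<Omega>"
  shows "\<exists>\<sigma>>\<rho>. hline p a b \<sigma> \<in> frontier \<Omega>"
proof -
  obtain C where C: "\<forall>q\<in>\<Omega>. \<forall>q1\<in>\<Omega> \<inter> hplane q. \<forall>q2\<in>\<Omega> \<inter> hplane q. dH q1 q2 \<le> C"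
    using assms(2) unfolding horizontally_bounded_def by blast
  define nh where "nh = sqrt (norm a ^ 2 + norm b ^ 2)"
  have "0 < norm a ^ 2 + norm b ^ 2"
    using assms(3) by (auto intro: add_pos_nonneg add_nonneg_pos)
  then have nh: "nh > 0" by (simp add: nh_def)
  define M where "M = max (\<rho> + 1) ((\<bar>C\<bar> + 1) / nh)"
  have "(\<bar>C\<bar> + 1) / nh \<le> M"
    by (simp add: M_def)
  with nh have "\<bar>C\<bar> + 1 \<le> M * nh"
    by (simp add: pos_divide_le_eq)
  then have M: "M > \<rho>" "C < M * nh"
    by (auto simp: M_def)
  have p: "p \<in> \<Omega>" "p \<in> hplane p"
    using inside[rule_format, of 0] assms(4) hline_in_hplane[of p a b 0 0] by auto
  have "hline p a b M \<notin> \<Omega>"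
  proof
    assume "hline p a b M \<in> \<Omega>"
    then have "dH (hline p a b M) p \<le> C"
      using C p hline_in_hplane[of p a b M 0] by auto
    with M assms(4) nh show False by (simp add: dH_hline nh_def)
  qed
  moreover have "connected (hline p a b ` {0..M})"
    by (intro connected_continuous_image continuous_on_hline) simp
  moreover have "0 \<in> {0..M}" "M \<in> {0..M}"
    using M assms(4) by auto
  ultimately have "hline p a b ` {0..M} \<inter> frontier \<Omega> \<noteq> {}"
    using p by (intro connected_Int_frontier) (auto simp del: atLeastAtMost_iff)
  then obtain \<sigma> where \<sigma>: "\<sigma> \<in> {0..M}" "hline p a b \<sigma> \<in> frontier \<Omega>" by blast
  with assms(1) have "hline p a b \<sigma> \<notin> \<Omega>"
    by (simp add: frontier_def interior_open)
  with inside \<sigma> have "\<sigma> > \<rho>" by force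
  with \<sigma> show ?thesis by blast
qed

lemma gauge_lt_imp_bounds:
  assumes "gauge (x, y, t) < R"
  shows "norm x ^ 2 + norm y ^ 2 \<le> R ^ 2" and "\<bar>t\<bar> \<le> R ^ 2"
proof -
  define S where "S = norm x ^ 2 + norm y ^ 2"
  have "0 \<le> gauge (x, y, t)" by (simp add: gauge_eq)
  with assms have "root 4 (R ^ 4) = R"
    by (simp add: real_root_power_cancel)
  with assms have "root 4 (S ^ 2 + t ^ 2) < root 4 (R ^ 4)"
    by (simp add: gauge_eq S_def)
  then have lt: "S ^ 2 + t ^ 2 < (R ^ 2) ^ 2"
    by (simp flip: power_mult)
  have "S ^ 2 < (R ^ 2) ^ 2" and "\<bar>t\<bar> ^ 2 < (R ^ 2) ^ 2"
    unfolding power2_abs using lt zero_le_power2[of S] zero_le_power2[of t] by linarith+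
  then have "S < R ^ 2" and "\<bar>t\<bar> < R ^ 2"
    by (metis power_less_imp_less_base zero_le_power2)+
  then show "norm x ^ 2 + norm y ^ 2 \<le> R ^ 2" and "\<bar>t\<bar> \<le> R ^ 2"
    by (simp_all add: S_def)
qed

lemma norm_add_sq_le: "norm (x + y) ^ 2 \<le> 2 * (norm x ^ 2 + norm (y::'a::real_normed_vector) ^ 2)"
proof -
  have "norm (x + y) ^ 2 \<le> (norm x + norm y) ^ 2"
    by (simp add: norm_triangle_ineq power_mono)
  also have "\<dots> \<le> 2 * (norm x ^ 2 + norm y ^ 2)"
    using zero_le_power2[of "norm x - norm y"] by (simp add: power2_eq_square algebra_simps)
  finally show ?thesis .
qed

lemma two_abs_inner_le: "2 * \<bar>x \<bullet> y\<bar> \<le> norm x ^ 2 + norm (y::'a::real_inner) ^ 2"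
proof -
  have "2 * \<bar>x \<bullet> y\<bar> \<le> 2 * (norm x * norm y)"
    by (simp add: Cauchy_Schwarz_ineq2)
  also have "\<dots> \<le> norm x ^ 2 + norm y ^ 2"
    using zero_le_power2[of "norm x - norm y"] by (simp add: power2_eq_square algebra_simps)
  finally show ?thesis .
qed

lemma dH_hmult_horizontal_lt:
  fixes x y a b :: "real^'n::finite"
  assumes "norm x ^ 2 + norm y ^ 2 + norm a ^ 2 + norm b ^ 2 \<le> 3 * R ^ 2"
    and "\<bar>t\<bar> \<le> R ^ 2" and "R > 0"
  shows "dH (q \<circ>\<^sub>H (x, y, t) \<circ>\<^sub>H (a, b, 0)) q < 3 * R"
proof -
  define S where "S = norm (x + a) ^ 2 + norm (y + b) ^ 2"
  define T where "T = t + 2 * (y \<bullet> a - x \<bullet> b)"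
  have "norm (x + a) ^ 2 \<le> 2 * (norm x ^ 2 + norm a ^ 2)"
    and "norm (y + b) ^ 2 \<le> 2 * (norm y ^ 2 + norm b ^ 2)"
    by (rule norm_add_sq_le)+
  with assms(1) have "S \<le> 6 * R ^ 2" by (simp add: S_def)
  then have "S ^ 2 \<le> (6 * R ^ 2) ^ 2" by (intro power_mono) (simp_all add: S_def)
  have "2 * \<bar>y \<bullet> a\<bar> \<le> norm y ^ 2 + norm a ^ 2" and "2 * \<bar>x \<bullet> b\<bar> \<le> norm x ^ 2 + norm b ^ 2"
    by (simp_all add: two_abs_inner_le)
  with assms(1,2) have "\<bar>T\<bar> \<le> 4 * R ^ 2" by (simp add: T_def abs_le_iff) linarith
  then have "T ^ 2 \<le> (4 * R ^ 2) ^ 2" by (metis abs_ge_zero power2_abs power_mono)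
  have "(6 * R ^ 2) ^ 2 + (4 * R ^ 2) ^ 2 < (3 * R) ^ 4"
    using assms(3) by (simp add: power_mult_distrib flip: power_mult)
  with \<open>S ^ 2 \<le> _\<close> \<open>T ^ 2 \<le> _\<close> have "S ^ 2 + T ^ 2 < (3 * R) ^ 4"
    by linarith
  then have "root 4 (S ^ 2 + T ^ 2) < root 4 ((3 * R) ^ 4)"
    by simp
  also have "\<dots> = 3 * R" using assms(3) by (intro real_root_power_cancel) auto
  finally show ?thesis
    by (simp add: dH_def hmult_assoc hmult_hinv_left gauge_eq S_def T_def)
qed

locale H_convex_vanishing_on_frontier =
  fixes \<Omega> :: "'n::finite heis set" and u :: "'n heis \<Rightarrow> real"
  assumes open_domain: "open \<Omega>"
    and horizontally_bounded_domain: "horizontally_bounded \<Omega>"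
    and H_convex: "H_convex_on (closure \<Omega>) u"
    and vanishes_on_frontier: "\<forall>p\<in>frontier \<Omega>. u p = 0"
begin

lemma hline_exit:
  assumes "(a, b) \<noteq> (0, 0)" and "\<rho> \<ge> 0" and "\<forall>s\<in>{0..\<rho>}. hline p a b s \<in> \<Omega>"
  obtains \<sigma> where "\<sigma> > \<rho>" and "hline p a b \<sigma> \<in> closure \<Omega>" and "u (hline p a b \<sigma>) = 0"
  using hline_meets_frontier[OF open_domain horizontally_bounded_domain assms] vanishes_on_frontier
  by (auto simp: frontier_def)

lemma u_nonpos:
  assumes "p \<in> \<Omega>"
  shows "u p \<le> 0"
proof -
  obtain e :: "real^'n" where "norm e = 1"
    by (metis vector_choose_size zero_le_one)
  then have e: "(e, 0) \<noteq> (0, 0)" "(-e, 0) \<noteq> (0, 0)" by auto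
  have inside: "\<forall>s\<in>{0..0}. hline p a b s \<in> \<Omega>" for a b
    using assms by simp
  obtain \<sigma>1 where \<sigma>1: "\<sigma>1 > 0" "hline p e 0 \<sigma>1 \<in> closure \<Omega>" "u (hline p e 0 \<sigma>1) = 0"
    using hline_exit[OF e(1) _ inside] by auto
  obtain \<sigma>2 where "\<sigma>2 > 0" "hline p (-e) 0 \<sigma>2 \<in> closure \<Omega>" "u (hline p (-e) 0 \<sigma>2) = 0"
    using hline_exit[OF e(2) _ inside] by auto
  then have \<sigma>2: "\<sigma>2 > 0" "hline p e 0 (-\<sigma>2) \<in> closure \<Omega>" "u (hline p e 0 (-\<sigma>2)) = 0"
    by (simp_all add: hline_def)
  define l where "l = \<sigma>2 / (\<sigma>1 + \<sigma>2)"
  have l: "0 \<le> l" "l \<le> 1" "(1 - l) * -\<sigma>2 + l * \<sigma>1 = 0"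
    using \<sigma>1 \<sigma>2 by (auto simp: l_def field_simps)
  have "u (hline p e 0 0) \<le> (1 - l) * u (hline p e 0 (-\<sigma>2)) + l * u (hline p e 0 \<sigma>1)"
    using H_convex_on_hline[OF H_convex \<sigma>2(2) \<sigma>1(2) l(1,2)] unfolding l(3) .
  with \<sigma>1(3) \<sigma>2(3) show ?thesis by simp
qed

lemma hline_step_decay:
  assumes "\<rho> > 0" and inside: "\<forall>s\<in>{0..1 + \<rho>}. hline p a b s \<in> \<Omega>"
  shows "u (hline p a b 1) \<le> \<rho> / (1 + \<rho>) * u p"
proof (cases "(a, b) = (0, 0)")
  case True
  have "u p \<le> 0" using inside[rule_format, of 0] assms(1) u_nonpos[of p] by simp
  moreover have "\<rho> / (1 + \<rho>) \<le> 1" using assms(1) by simp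
  ultimately show ?thesis
    using True mult_right_mono_neg[of "\<rho> / (1 + \<rho>)" 1 "u p"] by (simp add: hline_def)
next
  case False
  have "\<forall>s\<in>{0..\<rho>}. hline (hline p a b 1) a b s \<in> \<Omega>"
    using inside by (simp add: hline_hline)
  then obtain \<sigma> where "\<sigma> > \<rho>" "hline (hline p a b 1) a b \<sigma> \<in> closure \<Omega>"
    "u (hline (hline p a b 1) a b \<sigma>) = 0"
    using hline_exit[OF False less_imp_le[OF assms(1)]] by blast
  then have \<sigma>: "\<sigma> > \<rho>" "hline p a b (1 + \<sigma>) \<in> closure \<Omega>" "u (hline p a b (1 + \<sigma>)) = 0"
    by (simp_all add: hline_hline)
  have p: "hline p a b 0 \<in> closure \<Omega>" "u p \<le> 0"
    using inside[rule_format, of 0] assms(1) closure_subset u_nonpos[of p] by auto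
  define l where "l = 1 / (1 + \<sigma>)"
  have l: "0 \<le> l" "l \<le> 1" "(1 - l) * 0 + l * (1 + \<sigma>) = 1" "1 - l = \<sigma> / (1 + \<sigma>)"
    using \<sigma>(1) assms(1) by (auto simp: l_def field_simps)
  have "u (hline p a b 1) \<le> (1 - l) * u (hline p a b 0) + l * u (hline p a b (1 + \<sigma>))"
    using H_convex_on_hline[OF H_convex p(1) \<sigma>(2) l(1,2)] unfolding l(3) .
  then have "u (hline p a b 1) \<le> \<sigma> / (1 + \<sigma>) * u p"
    using \<sigma>(3) by (simp add: l(4))
  also have "\<dots> \<le> \<rho> / (1 + \<rho>) * u p"
    using \<sigma>(1) assms(1) p(2) by (intro mult_right_mono_neg) (auto simp: field_simps)
  finally show ?thesis .
qed

context
  fixes \<xi>0 :: "'n heis" and R :: real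
  assumes R: "R > 0" and ball_in_domain: "ballH \<xi>0 (3 * R) \<subseteq> \<Omega>"
begin

lemma ball_step_decay:
  assumes "\<rho> \<ge> 1" and w: "w \<circ>\<^sub>H (a, b, 0) = (x, y, t)" and "\<bar>t\<bar> \<le> R ^ 2"
    and bound: "norm x ^ 2 + norm y ^ 2 + \<rho> ^ 2 * (norm a ^ 2 + norm b ^ 2) \<le> 3 * R ^ 2"
  shows "u (\<xi>0 \<circ>\<^sub>H (x, y, t)) \<le> \<rho> / (1 + \<rho>) * u (\<xi>0 \<circ>\<^sub>H w)"
proof -
  have one: "hline (\<xi>0 \<circ>\<^sub>H w) a b 1 = \<xi>0 \<circ>\<^sub>H (x, y, t)"
    by (simp add: hline_1 hmult_assoc w)
  have "\<forall>s\<in>{0..1 + \<rho>}. hline (\<xi>0 \<circ>\<^sub>H w) a b s \<in> \<Omega>"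
  proof
    fix s assume "s \<in> {0..1 + \<rho>}"
    with assms(1) have "\<bar>s - 1\<bar> \<le> \<bar>\<rho>\<bar>" by auto
    then have "(s - 1) ^ 2 * (norm a ^ 2 + norm b ^ 2) \<le> \<rho> ^ 2 * (norm a ^ 2 + norm b ^ 2)"
      by (intro mult_right_mono) (simp_all add: abs_le_square_iff)
    with bound have "norm x ^ 2 + norm y ^ 2 + norm ((s - 1) *\<^sub>R a) ^ 2 + norm ((s - 1) *\<^sub>R b) ^ 2
        \<le> 3 * R ^ 2"
      by (simp add: power_mult_distrib distrib_left mult.commute)
    from dH_hmult_horizontal_lt[OF this assms(3) R]
    have "hline (\<xi>0 \<circ>\<^sub>H (x, y, t)) a b (s - 1) \<in> ballH \<xi>0 (3 * R)"
      by (simp add: ballH_def hline_def)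
    then show "hline (\<xi>0 \<circ>\<^sub>H w) a b s \<in> \<Omega>"
      using ball_in_domain hline_hline[of "\<xi>0 \<circ>\<^sub>H w" a b 1 "s - 1"] by (auto simp: one)
  qed
  from hline_step_decay[OF _ this] assms(1) show ?thesis
    by (simp add: one)
qed

lemma u_axis_le_ball:
  assumes "gauge (x, y, t) < R"
  shows "u (\<xi>0 \<circ>\<^sub>H (0, 0, t)) \<le> 3 / 5 * u (\<xi>0 \<circ>\<^sub>H (x, y, t))"
proof -
  note bounds = gauge_lt_imp_bounds[OF assms]
  have to_axis: "(x, y, t) \<circ>\<^sub>H (-x, -y, 0) = (0, 0, t)"
    by (simp add: inner_commute)
  have "norm (0::real^'n) ^ 2 + norm (0::real^'n) ^ 2
      + (3 / 2) ^ 2 * (norm (-x) ^ 2 + norm (-y) ^ 2) \<le> 3 * R ^ 2"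
    using bounds(1) zero_le_power2[of R] by (simp add: power_divide; linarith)
  from ball_step_decay[OF _ to_axis bounds(2) this] show ?thesis
    by simp
qed

lemma u_ball_le_axis:
  assumes "gauge (x, y, t) < R"
  shows "u (\<xi>0 \<circ>\<^sub>H (x, y, t)) \<le> 1 / 2 * u (\<xi>0 \<circ>\<^sub>H (0, 0, t))"
proof -
  note bounds = gauge_lt_imp_bounds[OF assms]
  have from_axis: "(0, 0, t) \<circ>\<^sub>H (x, y, 0) = (x, y, t)"
    by simp
  have "norm x ^ 2 + norm y ^ 2 + 1 ^ 2 * (norm x ^ 2 + norm y ^ 2) \<le> 3 * R ^ 2"
    using bounds(1) zero_le_power2[of R] by (simp; linarith)
  from ball_step_decay[OF _ from_axis bounds(2) this] show ?thesis
    by simp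
qed

lemma u_axis_le_axis:
  assumes t: "\<bar>t\<bar> \<le> R ^ 2" and t': "\<bar>t'\<bar> \<le> R ^ 2"
  shows "u (\<xi>0 \<circ>\<^sub>H (0, 0, t')) \<le> 1 / 8 * u (\<xi>0 \<circ>\<^sub>H (0, 0, t))"
proof -
  obtain e :: "real^'n" where e: "norm e = 1"
    by (metis vector_choose_size zero_le_one)
  \<comment> \<open>The steps (c e, 0), (0, \<mu> e), (-c e, -\<mu> e) form a closed horizontal triangle whose
    enclosed area shifts the height by -2 c \<mu> = t' - t.\<close>
  define c where "c = sqrt (\<bar>t' - t\<bar> / 2)"
  define \<mu> where "\<mu> = - sgn (t' - t) * c"
  have c2: "c ^ 2 = \<bar>t' - t\<bar> / 2"
    by (simp add: c_def)
  with t t' have cR: "c ^ 2 \<le> R ^ 2"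
    by (simp add: abs_le_iff) arith
  have "\<mu> ^ 2 = c ^ 2"
    by (simp add: \<mu>_def c_def power_mult_distrib sgn_if)
  with e have norms: "norm (c *\<^sub>R e) ^ 2 = c ^ 2" "norm (\<mu> *\<^sub>R e) ^ 2 = c ^ 2"
    by (simp_all add: power_mult_distrib)
  have "e \<bullet> e = 1"
    using e by (simp add: power2_norm_eq_inner[symmetric])
  then have "2 * (c *\<^sub>R e \<bullet> \<mu> *\<^sub>R e) = - sgn (t' - t) * (2 * c ^ 2)"
    by (simp add: \<mu>_def power2_eq_square)
  also have "\<dots> = - (t' - t)"
    using c2 sgn_mult_abs[of "t' - t"] by (simp add: mult.commute)
  finally have vertical: "t - 2 * (c *\<^sub>R e \<bullet> \<mu> *\<^sub>R e) = t'"
    by simp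
  have step1: "u (\<xi>0 \<circ>\<^sub>H (c *\<^sub>R e, 0, t)) \<le> 1 / 2 * u (\<xi>0 \<circ>\<^sub>H (0, 0, t))"
    using ball_step_decay[of 1 "(0, 0, t)" "c *\<^sub>R e" 0] t cR norms by simp
  have step2: "u (\<xi>0 \<circ>\<^sub>H (c *\<^sub>R e, \<mu> *\<^sub>R e, t')) \<le> 1 / 2 * u (\<xi>0 \<circ>\<^sub>H (c *\<^sub>R e, 0, t))"
    using ball_step_decay[of 1 "(c *\<^sub>R e, 0, t)" 0 "\<mu> *\<^sub>R e"] t' cR norms vertical by simp
  have step3: "u (\<xi>0 \<circ>\<^sub>H (0, 0, t')) \<le> 1 / 2 * u (\<xi>0 \<circ>\<^sub>H (c *\<^sub>R e, \<mu> *\<^sub>R e, t'))"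
    using ball_step_decay[of 1 "(c *\<^sub>R e, \<mu> *\<^sub>R e, t')" "- c *\<^sub>R e" "- \<mu> *\<^sub>R e"] t' cR norms
    by (simp add: inner_commute)
  from step1 step2 step3 show ?thesis
    by linarith
qed

lemma harnack_ball:
  assumes "\<xi> \<in> ballH \<xi>0 R" and "\<zeta> \<in> ballH \<xi>0 R"
  shows "u \<zeta> \<le> 3 / 80 * u \<xi>"
proof -
  obtain x y t where w: "hinv \<xi>0 \<circ>\<^sub>H \<xi> = (x, y, t)" by (metis prod_cases3)
  obtain x' y' t' where w': "hinv \<xi>0 \<circ>\<^sub>H \<zeta> = (x', y', t')" by (metis prod_cases3)
  have g: "gauge (x, y, t) < R" "gauge (x', y', t') < R"
    using assms w w' by (simp_all add: ballH_def dH_def)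
  have "\<xi> = \<xi>0 \<circ>\<^sub>H (x, y, t)" "\<zeta> = \<xi>0 \<circ>\<^sub>H (x', y', t')"
    by (metis w w' hmult_hinv_right)+
  then show ?thesis
    using u_axis_le_ball[OF g(1)] u_ball_le_axis[OF g(2)]
      u_axis_le_axis[OF gauge_lt_imp_bounds(2)[OF g(1)] gauge_lt_imp_bounds(2)[OF g(2)]]
    by simp
qed

end

end


theorem theorem6p7:
  fixes \<Omega> :: "'n::finite heis set" and u :: "'n heis \<Rightarrow> real"
    and \<xi>0 :: "'n heis" and R :: real
  assumes "open \<Omega>" and "horizontally_bounded \<Omega>" and "convex \<Omega>"
    and "H_convex_on (closure \<Omega>) u"
    and "\<forall>p\<in>frontier \<Omega>. u p = 0"
    and "\<xi>0 \<in> \<Omega>" and "R > 0" and "ballH \<xi>0 (3 * R) \<subseteq> \<Omega>"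
  shows "\<forall>\<xi>\<in>ballH \<xi>0 R. \<forall>\<zeta>\<in>ballH \<xi>0 R. u \<xi> / 31 \<ge> u \<zeta> \<and> u \<zeta> \<ge> 31 * u \<xi>"
proof (intro ballI conjI)
  interpret H_convex_vanishing_on_frontier \<Omega> u
    using assms(1,2,4,5) by unfold_locales
  fix \<xi> \<zeta> assume in_ball: "\<xi> \<in> ballH \<xi>0 R" "\<zeta> \<in> ballH \<xi>0 R"
  then have "\<xi> \<in> \<Omega>"
    using assms(7,8) by (auto simp: ballH_def)
  then have "u \<xi> \<le> 0"
    by (rule u_nonpos)
  moreover have "u \<zeta> \<le> 3 / 80 * u \<xi>" "u \<xi> \<le> 3 / 80 * u \<zeta>"
    using harnack_ball[OF assms(7,8)] in_ball by auto
  ultimately show "u \<xi> / 31 \<ge> u \<zeta>" "u \<zeta> \<ge> 31 * u \<xi>"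
    by linarith+
qed

end
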